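(* Let $G(\pi_i,\pi_i')=\frac12\|\pi_i-\pi_i'\|^2$ and $\mu>0$. Let $K\ge3$ and $T_\sigma\ge\max(K^4,3)$. Let $\sigma^0\in\mathcal X$ be deterministic and let $\sigma^1,\dots,\sigma^K$ be $\mathcal X$-valued random variables such that, for some $c>0$, $$\mathbb E\big[\|\pi^{\mu,\sigma^k}-\sigma^{k+1}\|^2\mid\sigma^k\big]\le c^2\frac{\ln T_\sigma}{T_\sigma}\quad\text{for } k=0,\dots,K-1.$$ Assume $\sqrt{\sum_{i=1}^N\|\nabla_{\pi_i}v_i(\pi)\|^2}\le\zeta$ for all $\pi\in\mathcal X$. Then $$\mathbb E[\mathrm{exploit}(\sigma^K)]\le\frac{2\Big(\mathrm{diam}(\mathcal X)\big(cL+\mu\sqrt c\sqrt{2\,\mathrm{diam}(\mathcal X)+\frac\zeta\mu+c}\big)+c\zeta\Big)\ln K+\mu\,\mathrm{diam}(\mathcal X)^2}{\sqrt K}.$$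
   Context: Game. Let $N\ge1$. For each $i\in[N]$, $\mathcal X_i\subseteq\mathbb R^{d_i}$ is a nonempty compact convex set, and $\mathcal X=\prod_i\mathcal X_i$. Each $v_i:\mathcal X\to\mathbb R$ is differentiable, with block gradient $\nabla_{\pi_i}v_i$. The norm is Euclidean, with $\|\pi\|^2=\sum_i\|\pi_i\|^2$. The game is monotone: $\sum_i\langle\nabla_{\pi_i}v_i(\pi)-\nabla_{\pi_i}v_i(\pi'),\pi_i-\pi_i'\rangle\le0$ for all $\pi,\pi'$. The game is $L$-smooth: $\sum_i\|\nabla_{\pi_i}v_i(\pi)-\nabla_{\pi_i}v_i(\pi')\|^2\le L^2\|\pi-\pi'\|^2$. Exploitability and diameter: $\mathrm{exploit}(\pi)=\sum_i(\max_{\tilde\pi_i\in\mathcal X_i}v_i(\tilde\pi_i,\pi_{-i})-v_i(\pi))$ and $\mathrm{diam}(\mathcal X)=\sup_{\pi,\pi'\in\mathcal X}\|\pi-\pi'\|$. Perturbed equilibrium. For $\mu>0$ and $\sigma\in\mathcal X$, $\pi^{\mu,\sigma}$ is the (unique) profile with $\pi_i^{\mu,\sigma}\in\arg\max_{\pi_i\in\mathcal X_i}\{v_i(\pi_i,\pi^{\mu,\sigma}_{-i})-\mu G(\pi_i,\sigma_i)\}$ for all $i$. *)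

theory Defs
  imports "HOL-Probability.Probability"
begin

text \<open>Strategy profiles: players are indexed by a finite type 'n, each player's strategy
lives in a common Euclidean space 'e, and a profile is an element of 'e ^ 'n, whose
Euclidean norm satisfies norm pi ^ 2 = sum of norm (pi $ i) ^ 2.\<close>

definition upd :: "('e ^ 'n) \<Rightarrow> 'n \<Rightarrow> 'e \<Rightarrow> ('e ^ 'n)" where
  "upd p i x = (\<chi> j. if j = i then x else p $ j)"

definition profiles :: "('n \<Rightarrow> 'e set) \<Rightarrow> ('e ^ 'n) set" where
  "profiles Xs = {p. \<forall>i. p $ i \<in> Xs i}"

definition exploit :: "('n::finite \<Rightarrow> ('e ^ 'n) \<Rightarrow> real) \<Rightarrow> ('n \<Rightarrow> 'e set) \<Rightarrow> ('e ^ 'n) \<Rightarrow> real" where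
  "exploit v Xs p = (\<Sum>i\<in>UNIV. (SUP y\<in>Xs i. v i (upd p i y)) - v i p)"

definition is_perturbed_eq ::
  "('n \<Rightarrow> ('e::real_normed_vector ^ 'n) \<Rightarrow> real) \<Rightarrow> ('n \<Rightarrow> 'e set) \<Rightarrow> real \<Rightarrow> ('e ^ 'n) \<Rightarrow> ('e ^ 'n) \<Rightarrow> bool" where
  "is_perturbed_eq v Xs \<mu> s p \<longleftrightarrow> p \<in> profiles Xs \<and>
     (\<forall>i. \<forall>y\<in>Xs i. v i (upd p i y) - \<mu> * (norm (y - s $ i))\<^sup>2 / 2
                    \<le> v i p - \<mu> * (norm (p $ i - s $ i))\<^sup>2 / 2)"

definition perturbed_eq ::
  "('n \<Rightarrow> ('e::real_normed_vector ^ 'n) \<Rightarrow> real) \<Rightarrow> ('n \<Rightarrow> 'e set) \<Rightarrow> real \<Rightarrow> ('e ^ 'n) \<Rightarrow> ('e ^ 'n)" where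
  "perturbed_eq v Xs \<mu> s = (THE p. is_perturbed_eq v Xs \<mu> s p)"

end

theory Submission
  imports Defs
begin

text \<open>The perturbed equilibrium map \<open>s \<mapsto> \<pi>\<^sup>\<mu>\<^sup>,\<^sup>s\<close> is the resolvent of the monotone
operator "negated game field plus normal cone of the strategy set", hence firmly nonexpansive,
and by Brouwer it has a fixed point. Along an inexact iteration \<open>\<sigma>\<^sup>k\<^sup>+\<^sup>1 \<approx> \<pi>\<^sup>\<mu>\<^sup>,\<^sup>\<sigma>\<^sup>k\<close> the
residuals \<open>r\<^sub>k = \<parallel>\<pi>\<^sup>\<mu>\<^sup>,\<^sup>\<sigma>\<^sup>k - \<sigma>\<^sup>k\<parallel>\<close> grow at most by the step errors \<open>e\<^sub>k\<close>, while their
squares telescope against the distances to the fixed point; so the last residual is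
\<open>diam / \<surd>K\<close> up to accumulated errors. The exploitability of \<open>\<sigma>\<^sup>K\<close> is at most
\<open>\<mu> diam r\<^sub>K\<^sub>-\<^sub>1 + (L diam + \<zeta>) e\<^sub>K\<^sub>-\<^sub>1\<close>, and each error has expectation at most
\<open>c \<surd>(ln T / T) \<le> 2 c \<surd>(ln K) / K\<^sup>2\<close>.\<close>

lemma upd_nth: "upd p i y $ j = (if j = i then y else p $ j)"
  unfolding upd_def by simp

lemma upd_nth_self [simp]: "upd p i y $ i = y"
  by (simp add: upd_nth)

lemma upd_upd [simp]: "upd (upd p i x) i y = upd p i y"
  by (simp add: upd_nth vec_eq_iff)

lemma upd_self [simp]: "upd p i (p $ i) = p"
  by (simp add: upd_nth vec_eq_iff)

lemma upd_in_profiles: "p \<in> profiles Xs \<Longrightarrow> y \<in> Xs i \<Longrightarrow> upd p i y \<in> profiles Xs"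
  unfolding profiles_def by (auto simp: upd_nth)

lemma inner_upd_diff:
  fixes a :: "'e::real_inner ^ 'n::finite"
  shows "a \<bullet> (upd p i y - p) = a $ i \<bullet> (y - p $ i)"
proof -
  have "a \<bullet> (upd p i y - p) = (\<Sum>j\<in>UNIV. a $ j \<bullet> (upd p i y - p) $ j)"
    by (simp add: inner_vec_def)
  also have "\<dots> = (\<Sum>j\<in>UNIV. if j = i then a $ i \<bullet> (y - p $ i) else 0)"
    by (intro sum.cong) (auto simp: upd_nth)
  finally show ?thesis by simp
qed

lemma closed_profiles:
  fixes Xs :: "'n::finite \<Rightarrow> 'e::euclidean_space set"
  assumes "\<And>i. closed (Xs i)"
  shows "closed (profiles Xs)"
proof -
  have "profiles Xs = (\<Inter>i. (\<lambda>p. p $ i) -` Xs i)"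
    unfolding profiles_def by auto
  then show ?thesis
    by (simp add: closed_INT closed_vimage_vec_nth assms)
qed

lemma bounded_profiles:
  fixes Xs :: "'n::finite \<Rightarrow> 'e::euclidean_space set"
  assumes "\<And>i. bounded (Xs i)"
  shows "bounded (profiles Xs)"
proof -
  obtain B where B: "\<And>i x. x \<in> Xs i \<Longrightarrow> norm x \<le> B i"
    using assms unfolding bounded_iff by metis
  have "norm p \<le> (\<Sum>i\<in>UNIV. B i)" if "p \<in> profiles Xs" for p
  proof -
    have "norm p = L2_set (\<lambda>i. norm (p $ i)) UNIV"
      by (simp add: norm_vec_def)
    also have "\<dots> \<le> (\<Sum>i\<in>UNIV. norm (p $ i))"
      by (rule L2_set_le_sum) auto
    also have "\<dots> \<le> (\<Sum>i\<in>UNIV. B i)"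
      using that B unfolding profiles_def by (intro sum_mono) auto
    finally show ?thesis .
  qed
  then show ?thesis
    unfolding bounded_iff by blast
qed

lemma compact_profiles:
  fixes Xs :: "'n::finite \<Rightarrow> 'e::euclidean_space set"
  assumes "\<And>i. compact (Xs i)"
  shows "compact (profiles Xs)"
  using assms
  by (auto simp: compact_eq_bounded_closed intro!: closed_profiles bounded_profiles)

lemma convex_profiles: "(\<And>i. convex (Xs i)) \<Longrightarrow> convex (profiles Xs)"
  unfolding profiles_def convex_def by auto

lemma profiles_nonempty:
  assumes "\<And>i. Xs i \<noteq> {}"
  shows "profiles Xs \<noteq> {}"
proof -
  have "(\<chi> i. SOME x. x \<in> Xs i) \<in> profiles Xs"
    unfolding profiles_def using assms by (simp add: some_in_eq)
  then show ?thesis by auto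
qed

definition game_field :: "('n \<Rightarrow> ('e ^ 'n) \<Rightarrow> 'e) \<Rightarrow> ('e ^ 'n) \<Rightarrow> ('e ^ 'n)" where
  "game_field gr p = (\<chi> i. gr i p)"

lemma inner_game_field_diff:
  "(game_field gr p - game_field gr q) \<bullet> (p - q) = (\<Sum>i\<in>UNIV. (gr i p - gr i q) \<bullet> (p $ i - q $ i))"
  by (simp add: game_field_def inner_vec_def)

lemma norm_game_field_diff_sq:
  "(norm (game_field gr p - game_field gr q))\<^sup>2 = (\<Sum>i\<in>UNIV. (norm (gr i p - gr i q))\<^sup>2)"
  by (simp add: game_field_def norm_vec_def L2_set_def sum_nonneg)

lemma norm_game_field: "norm (game_field gr p) = sqrt (\<Sum>i\<in>UNIV. (norm (gr i p))\<^sup>2)"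
  by (simp add: game_field_def norm_vec_def L2_set_def)

section \<open>Inexact iteration of firmly nonexpansive maps\<close>

lemma power2_norm_add:
  fixes u w :: "'a::real_inner"
  shows "(norm (u + w))\<^sup>2 = (norm u)\<^sup>2 + 2 * (u \<bullet> w) + (norm w)\<^sup>2"
  unfolding power2_norm_eq_inner by (simp add: inner_add_left inner_add_right inner_commute)

lemma le_div_sqrt_of_sum_power2_le:
  fixes r :: "nat \<Rightarrow> real"
  assumes "0 < m" and below: "\<And>k. k < m \<Longrightarrow> a \<le> r k"
    and sum_le: "(\<Sum>k<m. (r k)\<^sup>2) \<le> B\<^sup>2" and "0 \<le> B"
  shows "a \<le> B / sqrt (real m)"
proof (cases "a \<le> 0")
  case True
  then show ?thesis
    using \<open>0 \<le> B\<close> by (meson divide_nonneg_nonneg order_trans real_sqrt_ge_zero of_nat_0_le_iff)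
next
  case False
  have "real m * a\<^sup>2 = (\<Sum>k<m. a\<^sup>2)"
    by simp
  also have "\<dots> \<le> (\<Sum>k<m. (r k)\<^sup>2)"
    using False below by (intro sum_mono power_mono) auto
  finally have "sqrt (real m * a\<^sup>2) \<le> sqrt (B\<^sup>2)"
    using sum_le by (intro real_sqrt_le_mono) linarith
  then have "sqrt (real m) * a \<le> B"
    using False \<open>0 \<le> B\<close> by (simp add: real_sqrt_mult)
  then show ?thesis
    using \<open>0 < m\<close> by (simp add: pos_le_divide_eq mult.commute)
qed

definition firmly_nonexpansive :: "('a::real_inner \<Rightarrow> 'a) \<Rightarrow> bool" where
  "firmly_nonexpansive T \<longleftrightarrow> (\<forall>a b. (norm (T a - T b))\<^sup>2 \<le> (a - b) \<bullet> (T a - T b))"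

lemma firmly_nonexpansive_imp_nonexpansive:
  assumes "firmly_nonexpansive T"
  shows "norm (T a - T b) \<le> norm (a - b)"
proof -
  have "(norm (T a - T b))\<^sup>2 \<le> norm (a - b) * norm (T a - T b)"
    using assms norm_cauchy_schwarz[of "a - b" "T a - T b"]
    unfolding firmly_nonexpansive_def by (meson order_trans)
  then show ?thesis
    by (metis mult_le_cancel_right norm_ge_zero not_le power2_eq_square mult_zero_right le_less)
qed

lemma firmly_nonexpansive_residual:
  assumes "firmly_nonexpansive T"
  shows "norm ((a - T a) - (b - T b)) \<le> norm (a - b)"
proof -
  have "(norm ((a - b) - (T a - T b)))\<^sup>2
      = (norm (a - b))\<^sup>2 - 2 * ((a - b) \<bullet> (T a - T b)) + (norm (T a - T b))\<^sup>2"
    unfolding power2_norm_eq_inner by (simp add: inner_diff_left inner_diff_right inner_commute)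
  also have "\<dots> \<le> (norm (a - b))\<^sup>2"
    using assms[unfolded firmly_nonexpansive_def, rule_format, of a b] zero_le_power2[of "norm (T a - T b)"]
    by linarith
  finally have "norm ((a - b) - (T a - T b)) \<le> norm (a - b)"
    by (rule power2_le_imp_le) simp
  then show ?thesis
    by (simp add: algebra_simps)
qed

lemma firmly_nonexpansive_continuous_on:
  assumes "firmly_nonexpansive T"
  shows "continuous_on S T"
  by (rule lipschitz_on_continuous_on[where L = 1])
     (use firmly_nonexpansive_imp_nonexpansive[OF assms] in \<open>simp add: lipschitz_on_def dist_norm\<close>)

lemma firmly_nonexpansive_fixpoint_ineq:
  assumes "firmly_nonexpansive T" and "T x = x"
  shows "(norm (T a - x))\<^sup>2 + (norm (a - T a))\<^sup>2 \<le> (norm (a - x))\<^sup>2"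
proof -
  have "(T a - x) \<bullet> (a - T a) = (a - x) \<bullet> (T a - T x) - (norm (T a - T x))\<^sup>2"
    using assms(2) unfolding power2_norm_eq_inner
    by (simp add: inner_diff_left inner_diff_right inner_commute algebra_simps)
  then have "0 \<le> (T a - x) \<bullet> (a - T a)"
    using assms(1) unfolding firmly_nonexpansive_def by simp
  moreover have "a - x = (T a - x) + (a - T a)"
    by simp
  ultimately show ?thesis
    using power2_norm_add[of "T a - x" "a - T a"] by simp
qed

lemma firmly_nonexpansive_residual_le:
  assumes "firmly_nonexpansive T"
  shows "norm (T b - b) \<le> norm (T a - a) + norm (T a - b)"
proof -
  have "norm ((b - T b) - (T a - T (T a))) \<le> norm (T a - b)"
    using firmly_nonexpansive_residual[OF assms, of b "T a"] by (simp add: norm_minus_commute)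
  moreover have "norm (T a - T (T a)) \<le> norm (T a - a)"
    using firmly_nonexpansive_imp_nonexpansive[OF assms, of "T a" a] by (simp add: norm_minus_commute)
  moreover have "norm (b - T b) \<le> norm ((b - T b) - (T a - T (T a))) + norm (T a - T (T a))"
    using norm_triangle_ineq[of "(b - T b) - (T a - T (T a))" "T a - T (T a)"] by simp
  ultimately show ?thesis
    by (simp add: norm_minus_commute)
qed

lemma firmly_nonexpansive_residual_power2_le:
  assumes "firmly_nonexpansive T" and "T x = x"
    and "norm (T a - x) \<le> D" and "norm (T a - b) \<le> D"
  shows "(norm (T a - a))\<^sup>2 \<le> (norm (a - x))\<^sup>2 - (norm (b - x))\<^sup>2 + 3 * D * norm (T a - b)"
proof -
  let ?e = "norm (T a - b)"
  have fejer: "(norm (T a - x))\<^sup>2 + (norm (T a - a))\<^sup>2 \<le> (norm (a - x))\<^sup>2"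
    using firmly_nonexpansive_fixpoint_ineq[OF assms(1,2), of a] by (simp add: norm_minus_commute)
  have "b - x = (T a - x) + (b - T a)"
    by simp
  then have expand: "(norm (b - x))\<^sup>2 = (norm (T a - x))\<^sup>2 + 2 * ((T a - x) \<bullet> (b - T a)) + ?e\<^sup>2"
    using power2_norm_add[of "T a - x" "b - T a"] by (simp add: norm_minus_commute)
  have "(T a - x) \<bullet> (b - T a) \<le> norm (T a - x) * norm (b - T a)"
    by (rule norm_cauchy_schwarz)
  also have "\<dots> \<le> D * ?e"
    using assms(3) by (simp add: norm_minus_commute mult_right_mono)
  finally have cross: "(T a - x) \<bullet> (b - T a) \<le> D * ?e" .
  have "?e\<^sup>2 \<le> D * ?e"
    unfolding power2_eq_square using assms(4) by (intro mult_right_mono) auto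
  then show ?thesis
    using fejer expand cross by linarith
qed

lemma firmly_nonexpansive_residual_le_sum:
  assumes "firmly_nonexpansive T" and "k \<le> n"
  shows "norm (T (s n) - s n) \<le> norm (T (s k) - s k) + (\<Sum>j\<in>{k..<n}. norm (T (s j) - s (Suc j)))"
  using \<open>k \<le> n\<close>
proof (induction n rule: dec_induct)
  case (step n)
  then show ?case
    using firmly_nonexpansive_residual_le[OF assms(1), where a = "s n" and b = "s (Suc n)"] by simp
qed simp

lemma firmly_nonexpansive_sum_residual_power2_le:
  assumes fne: "firmly_nonexpansive T" and x: "x \<in> S" "T x = x" and "T ` S \<subseteq> S"
    and diam: "\<And>a b. a \<in> S \<Longrightarrow> b \<in> S \<Longrightarrow> norm (a - b) \<le> D"
    and s: "\<And>k. k \<le> m \<Longrightarrow> s k \<in> S"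
  shows "(\<Sum>k<m. (norm (T (s k) - s k))\<^sup>2) \<le> D\<^sup>2 + 3 * D * (\<Sum>k<m. norm (T (s k) - s (Suc k)))"
proof -
  have "(\<Sum>k<m. (norm (T (s k) - s k))\<^sup>2)
      \<le> (\<Sum>k<m. (norm (s k - x))\<^sup>2 - (norm (s (Suc k) - x))\<^sup>2 + 3 * D * norm (T (s k) - s (Suc k)))"
  proof (intro sum_mono firmly_nonexpansive_residual_power2_le[OF fne x(2)] diam)
    fix k assume "k \<in> {..<m}"
    then show "T (s k) \<in> S" "s (Suc k) \<in> S"
      using s[of k] s[of "Suc k"] \<open>T ` S \<subseteq> S\<close> by auto
  qed (use x(1) s \<open>T ` S \<subseteq> S\<close> in \<open>auto simp: image_subset_iff\<close>)
  also have "\<dots> = (norm (s 0 - x))\<^sup>2 - (norm (s m - x))\<^sup>2 + 3 * D * (\<Sum>k<m. norm (T (s k) - s (Suc k)))"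
    unfolding sum.distrib sum_distrib_left
    by (simp only: sum_lessThan_telescope'[of "\<lambda>k. (norm (s k - x))\<^sup>2"])
  also have "\<dots> \<le> D\<^sup>2 + 3 * D * (\<Sum>k<m. norm (T (s k) - s (Suc k)))"
    using power_mono[OF diam[OF s[of 0] x(1)] norm_ge_zero, of 2] zero_le_power2[of "norm (s m - x)"]
    by linarith
  finally show ?thesis .
qed

text \<open>Up to the accumulated errors the residuals are nonincreasing, while their squares sum
to at most \<open>D\<^sup>2 + 3 D \<Sum> e\<^sub>k\<close>; so the last residual is bounded by their root mean square.\<close>

lemma firmly_nonexpansive_inexact_iteration:
  assumes fne: "firmly_nonexpansive T" and x: "x \<in> S" "T x = x" and "T ` S \<subseteq> S"
    and diam: "\<And>a b. a \<in> S \<Longrightarrow> b \<in> S \<Longrightarrow> norm (a - b) \<le> D"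
    and s: "\<And>k. k \<le> Suc n \<Longrightarrow> s k \<in> S"
  shows "norm (T (s n) - s n) \<le> (\<Sum>k<n. norm (T (s k) - s (Suc k)))
           + (D + 3/2 * (\<Sum>k<Suc n. norm (T (s k) - s (Suc k)))) / sqrt (real (Suc n))"
proof -
  define e where "e k = norm (T (s k) - s (Suc k))" for k
  define E where "E = (\<Sum>k<Suc n. e k)"
  have "0 \<le> D"
    using diam[OF x(1) x(1)] by simp
  have "0 \<le> E"
    unfolding E_def e_def by (simp add: sum_nonneg)
  have below: "norm (T (s n) - s n) - (\<Sum>k<n. e k) \<le> norm (T (s k) - s k)" if "k < Suc n" for k
  proof -
    have "(\<Sum>j\<in>{k..<n}. e j) \<le> (\<Sum>j<n. e j)"
      by (rule sum_mono2) (auto simp: e_def)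
    then show ?thesis
      using firmly_nonexpansive_residual_le_sum[OF fne, of k n s] that unfolding e_def by simp
  qed
  have "(\<Sum>k<Suc n. (norm (T (s k) - s k))\<^sup>2) \<le> D\<^sup>2 + 3 * D * E"
    using firmly_nonexpansive_sum_residual_power2_le[where s = s and m = "Suc n", OF fne x _ diam s]
      \<open>T ` S \<subseteq> S\<close> unfolding E_def e_def by blast
  moreover have "(D + 3/2 * E)\<^sup>2 = D\<^sup>2 + 3 * D * E + (3/2 * E)\<^sup>2"
    by (simp add: power2_eq_square algebra_simps)
  ultimately have "(\<Sum>k<Suc n. (norm (T (s k) - s k))\<^sup>2) \<le> (D + 3/2 * E)\<^sup>2"
    using zero_le_power2[of "3/2 * E"] by linarith
  with below have "norm (T (s n) - s n) - (\<Sum>k<n. e k) \<le> (D + 3/2 * E) / sqrt (real (Suc n))"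
    using \<open>0 \<le> D\<close> \<open>0 \<le> E\<close> by (intro le_div_sqrt_of_sum_power2_le) auto
  then show ?thesis
    unfolding e_def E_def by simp
qed

section \<open>Rate estimates\<close>

lemma one_le_ln: "3 \<le> x \<Longrightarrow> 1 \<le> ln (x::real)"
  using exp_le ln_exp ln_le_cancel_iff by (metis exp_gt_zero order_trans order_less_le_trans)

lemma sqrt_ln_div_le:
  fixes K T c :: real
  assumes K: "3 \<le> K" and T: "K ^ 4 \<le> T" and "0 \<le> c"
  shows "c * sqrt (ln T / T) \<le> 2 * c * sqrt (ln K) / K\<^sup>2"
proof -
  have "exp 1 \<le> K ^ 4"
    using exp_le K self_le_power[of K 4] by linarith
  then have "ln T / T \<le> ln (K ^ 4) / K ^ 4"
    using T by (rule ln_x_over_x_mono)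
  also have "\<dots> = (2 * sqrt (ln K) / K\<^sup>2)\<^sup>2"
    using K one_le_ln[OF K] by (simp add: ln_realpow power_divide power_mult_distrib)
  finally have "sqrt (ln T / T) \<le> 2 * sqrt (ln K) / K\<^sup>2"
    using K by (simp add: real_le_lsqrt)
  then have "c * sqrt (ln T / T) \<le> c * (2 * sqrt (ln K) / K\<^sup>2)"
    using \<open>0 \<le> c\<close> by (rule mult_left_mono)
  then show ?thesis
    by (simp add: ac_simps)
qed

lemma weighted_sqrt_le_square:
  fixes K :: real
  assumes "3 \<le> K"
  shows "(K - 1) * sqrt K + 3/2 * K \<le> K\<^sup>2"
proof -
  have "sqrt K \<le> (K + 1) / 2"
    using sqrt_le_D arith_geo_mean_sqrt[of K 1] assms by simp
  then have "(K - 1) * sqrt K \<le> (K - 1) * ((K + 1) / 2)"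
    using assms by (intro mult_left_mono) auto
  moreover have "3 * K \<le> K * K"
    using assms by (intro mult_right_mono) auto
  ultimately show ?thesis
    by (simp add: power2_eq_square algebra_simps)
qed

lemma error_terms_le_ln_div_sqrt:
  fixes K c \<delta> :: real
  assumes K: "3 \<le> K" and \<delta>: "0 \<le> \<delta>" "\<delta> \<le> 2 * c * sqrt (ln K) / K\<^sup>2" and "0 < c"
  shows "(K - 1) * \<delta> + 3/2 * (K * \<delta>) / sqrt K \<le> 2 * c * ln K / sqrt K"
    and "\<delta> \<le> 2 * c * ln K / sqrt K"
proof -
  have "sqrt K \<le> K" "K \<le> K\<^sup>2"
    using K by (auto simp: real_sqrt_le_iff' power2_eq_square)
  then have sk: "0 < sqrt K" "sqrt K * sqrt K = K" "sqrt K \<le> K\<^sup>2"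
    using K by auto
  have "sqrt (ln K) \<le> ln K"
    using one_le_ln[OF K] by (auto simp: real_sqrt_le_iff' power2_eq_square)
  then have "2 * c * sqrt (ln K) \<le> 2 * c * ln K"
    using \<open>0 < c\<close> by simp
  moreover have "\<delta> * K\<^sup>2 \<le> 2 * c * sqrt (ln K)"
    using \<delta>(2) K by (simp add: pos_le_divide_eq)
  ultimately have \<delta>_K2: "\<delta> * K\<^sup>2 \<le> 2 * c * ln K"
    by linarith
  have "((K - 1) * \<delta> + 3/2 * (K * \<delta>) / sqrt K) * sqrt K = \<delta> * ((K - 1) * sqrt K + 3/2 * K)"
    using sk by (simp add: algebra_simps)
  also have "\<dots> \<le> \<delta> * K\<^sup>2"
    using weighted_sqrt_le_square[OF K] \<delta> by (simp add: mult_left_mono)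
  finally show "(K - 1) * \<delta> + 3/2 * (K * \<delta>) / sqrt K \<le> 2 * c * ln K / sqrt K"
    using \<delta>_K2 sk by (simp add: pos_le_divide_eq)
  have "\<delta> * sqrt K \<le> \<delta> * K\<^sup>2"
    using sk \<delta> by (simp add: mult_left_mono)
  then show "\<delta> \<le> 2 * c * ln K / sqrt K"
    using \<delta>_K2 sk by (simp add: pos_le_divide_eq)
qed

lemma explicit_rate_le:
  fixes K c D L \<zeta> \<mu> \<delta> :: real
  assumes K: "3 \<le> K" and \<delta>: "0 \<le> \<delta>" "\<delta> \<le> 2 * c * sqrt (ln K) / K\<^sup>2"
    and "0 < c" "0 \<le> D" "0 \<le> L" "0 \<le> \<zeta>" "0 < \<mu>"
  shows "\<mu> * D * ((K - 1) * \<delta> + (D + 3/2 * (K * \<delta>)) / sqrt K) + (L * D + \<zeta>) * \<delta>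
    \<le> (2 * (D * (c * L + \<mu> * sqrt c * sqrt (2 * D + \<zeta> / \<mu> + c)) + c * \<zeta>) * ln K + \<mu> * D\<^sup>2) / sqrt K"
proof -
  define r where "r = sqrt c * sqrt (2 * D + \<zeta> / \<mu> + c)"
  have "c = sqrt c * sqrt c"
    using \<open>0 < c\<close> by simp
  also have "\<dots> \<le> r"
    unfolding r_def using assms by (intro mult_left_mono real_sqrt_le_mono) auto
  finally have "2 * c * ln K / sqrt K \<le> 2 * r * ln K / sqrt K"
    using one_le_ln[OF K] K by (intro divide_right_mono mult_right_mono mult_left_mono) auto
  then have "\<mu> * D * ((K - 1) * \<delta> + 3/2 * (K * \<delta>) / sqrt K) \<le> \<mu> * D * (2 * r * ln K / sqrt K)"
    using error_terms_le_ln_div_sqrt(1)[OF K \<delta> \<open>0 < c\<close>] assms by (intro mult_left_mono) auto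
  moreover have "(L * D + \<zeta>) * \<delta> \<le> (L * D + \<zeta>) * (2 * c * ln K / sqrt K)"
    using error_terms_le_ln_div_sqrt(2)[OF K \<delta> \<open>0 < c\<close>] assms by (intro mult_left_mono) auto
  moreover have "\<mu> * D * ((K - 1) * \<delta> + (D + 3/2 * (K * \<delta>)) / sqrt K)
      = \<mu> * D\<^sup>2 / sqrt K + \<mu> * D * ((K - 1) * \<delta> + 3/2 * (K * \<delta>) / sqrt K)"
    by (simp add: add_divide_distrib algebra_simps power2_eq_square)
  moreover have "\<mu> * D\<^sup>2 / sqrt K + \<mu> * D * (2 * r * ln K / sqrt K) + (L * D + \<zeta>) * (2 * c * ln K / sqrt K)
      = (2 * (D * (c * L + \<mu> * r) + c * \<zeta>) * ln K + \<mu> * D\<^sup>2) / sqrt K"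
    by (simp add: add_divide_distrib algebra_simps)
  ultimately show ?thesis
    unfolding r_def by (simp add: mult.assoc)
qed

lemma integral_le_of_nonneg_integrable_bound:
  fixes f g :: "'a \<Rightarrow> real"
  assumes "integrable M g" "\<And>x. x \<in> space M \<Longrightarrow> f x \<le> g x" "\<And>x. x \<in> space M \<Longrightarrow> 0 \<le> g x"
  shows "(\<integral>x. f x \<partial>M) \<le> (\<integral>x. g x \<partial>M)"
  using assms
  by (cases "integrable M f") (auto intro: integral_mono integral_nonneg_AE simp: not_integrable_integral_eq)

lemma (in prob_space) integral_le_of_cond_exp_power2_le:
  fixes f :: "'a \<Rightarrow> real"
  assumes "subalgebra M F" and f: "f \<in> borel_measurable M" "\<And>x. x \<in> space M \<Longrightarrow> \<bar>f x\<bar> \<le> B"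
    and cond: "AE x in M. real_cond_exp M F (\<lambda>y. (f y)\<^sup>2) x \<le> \<delta>\<^sup>2" and "0 < \<delta>"
  shows "(\<integral>x. f x \<partial>M) \<le> \<delta>"
proof -
  interpret finite_measure_subalgebra M F
    by unfold_locales (rule assms(1))
  have int_f: "integrable M f"
    using f by (intro integrable_const_bound[where B = B]) auto
  have int_f2: "integrable M (\<lambda>x. (f x)\<^sup>2)"
    using f by (intro integrable_const_bound[where B = "B\<^sup>2"])
      (auto simp: abs_le_square_iff[symmetric] intro: order_trans[OF _ abs_ge_self])
  have "(\<integral>x. (f x)\<^sup>2 \<partial>M) = (\<integral>x. real_cond_exp M F (\<lambda>y. (f y)\<^sup>2) x \<partial>M)"
    using real_cond_exp_int(2)[OF int_f2] by simp
  also have "\<dots> \<le> \<delta>\<^sup>2"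
    using integral_mono_AE[OF real_cond_exp_int(1)[OF int_f2] _ cond] by (simp add: prob_space)
  finally have sq: "(\<integral>x. (f x)\<^sup>2 \<partial>M) \<le> \<delta>\<^sup>2" .
  \<comment> \<open>AM-GM: \<open>f \<le> f\<^sup>2 / (2 \<delta>) + \<delta> / 2\<close>\<close>
  have "(\<integral>x. f x \<partial>M) \<le> (\<integral>x. (f x)\<^sup>2 / (2 * \<delta>) + \<delta> / 2 \<partial>M)"
  proof (rule integral_mono[OF int_f])
    show "integrable M (\<lambda>x. (f x)\<^sup>2 / (2 * \<delta>) + \<delta> / 2)"
      using int_f2 by simp
    show "f x \<le> (f x)\<^sup>2 / (2 * \<delta>) + \<delta> / 2" for x
      using \<open>0 < \<delta>\<close> sum_squares_bound[of "f x" \<delta>] by (simp add: field_simps power2_eq_square)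
  qed
  also have "\<dots> = (\<integral>x. (f x)\<^sup>2 \<partial>M) / (2 * \<delta>) + \<delta> / 2"
    using int_f2 by (simp add: prob_space)
  also have "\<dots> \<le> \<delta>"
    using sq \<open>0 < \<delta>\<close> by (simp add: field_simps power2_eq_square)
  finally show ?thesis .
qed

section \<open>Monotone games and perturbed equilibria\<close>

locale monotone_game =
  fixes Xs :: "'n::finite \<Rightarrow> 'e::euclidean_space set"
    and v :: "'n \<Rightarrow> ('e ^ 'n) \<Rightarrow> real"
    and gr :: "'n \<Rightarrow> ('e ^ 'n) \<Rightarrow> 'e"
    and L :: real
  assumes strategy_sets: "\<And>i. Xs i \<noteq> {} \<and> compact (Xs i) \<and> convex (Xs i)"
    and partial_gradient: "\<And>i p. p \<in> profiles Xs \<Longrightarrow>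
        ((\<lambda>x. v i (upd p i x)) has_derivative (\<lambda>h. gr i p \<bullet> h)) (at (p $ i))"
    and monotone: "\<And>p q. p \<in> profiles Xs \<Longrightarrow> q \<in> profiles Xs \<Longrightarrow>
        (\<Sum>i\<in>UNIV. (gr i p - gr i q) \<bullet> (p $ i - q $ i)) \<le> 0"
    and L_nonneg: "L \<ge> 0"
    and smooth: "\<And>p q. p \<in> profiles Xs \<Longrightarrow> q \<in> profiles Xs \<Longrightarrow>
        (\<Sum>i\<in>UNIV. (norm (gr i p - gr i q))\<^sup>2) \<le> L\<^sup>2 * (norm (p - q))\<^sup>2"
begin

abbreviation X :: "('e ^ 'n) set" where "X \<equiv> profiles Xs"
abbreviation F :: "('e ^ 'n) \<Rightarrow> ('e ^ 'n)" where "F \<equiv> game_field gr"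

lemma compact_X: "compact X"
  using strategy_sets by (intro compact_profiles) auto

lemma convex_X: "convex X"
  using strategy_sets by (intro convex_profiles) auto

lemma X_nonempty: "X \<noteq> {}"
  using strategy_sets by (intro profiles_nonempty) auto

lemma field_monotone: "p \<in> X \<Longrightarrow> q \<in> X \<Longrightarrow> (F p - F q) \<bullet> (p - q) \<le> 0"
  using monotone by (simp add: inner_game_field_diff)

lemma field_bound_nonneg: "(\<And>p. p \<in> X \<Longrightarrow> norm (F p) \<le> \<zeta>) \<Longrightarrow> 0 \<le> \<zeta>"
  using X_nonempty by (metis ex_in_conv norm_ge_zero order_trans)

lemma field_lipschitz:
  assumes "p \<in> X" "q \<in> X"
  shows "norm (F p - F q) \<le> L * norm (p - q)"
proof (rule power2_le_imp_le)
  show "(norm (F p - F q))\<^sup>2 \<le> (L * norm (p - q))\<^sup>2"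
    using smooth[OF assms] by (simp add: norm_game_field_diff_sq power_mult_distrib)
qed (use L_nonneg in simp)

lemma continuous_on_field: "continuous_on X F"
  by (rule lipschitz_on_continuous_on[where L = L])
     (use field_lipschitz L_nonneg in \<open>auto simp: lipschitz_on_def dist_norm\<close>)

lemma segment_point_in:
  assumes "p \<in> X" "y \<in> Xs i" "0 \<le> t" "t \<le> 1"
  shows "p $ i + t *\<^sub>R (y - p $ i) \<in> Xs i"
proof -
  have "(1 - t) *\<^sub>R p $ i + t *\<^sub>R y \<in> Xs i"
    using assms strategy_sets[of i] unfolding profiles_def by (auto intro: convexD_alt)
  moreover have "p $ i + t *\<^sub>R (y - p $ i) = (1 - t) *\<^sub>R p $ i + t *\<^sub>R y"
    by (simp add: scaleR_diff_right scaleR_diff_left)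
  ultimately show ?thesis by simp
qed

lemma has_real_derivative_along_segment:
  assumes "p \<in> X" "y \<in> Xs i" "0 \<le> t" "t \<le> 1"
  shows "((\<lambda>t. v i (upd p i (p $ i + t *\<^sub>R (y - p $ i)))) has_real_derivative
          gr i (upd p i (p $ i + t *\<^sub>R (y - p $ i))) \<bullet> (y - p $ i)) (at t)"
proof -
  let ?x = "p $ i + t *\<^sub>R (y - p $ i)"
  have "upd p i ?x \<in> X"
    by (rule upd_in_profiles[OF assms(1) segment_point_in[OF assms]])
  then have outer: "((\<lambda>x. v i (upd p i x)) has_derivative (\<lambda>h. gr i (upd p i ?x) \<bullet> h)) (at ?x)"
    using partial_gradient[of "upd p i ?x" i] by simp
  have inner: "((\<lambda>t. p $ i + t *\<^sub>R (y - p $ i)) has_derivative (\<lambda>h. h *\<^sub>R (y - p $ i))) (at t)"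
    by (auto intro!: derivative_eq_intros)
  have "((\<lambda>t. v i (upd p i (p $ i + t *\<^sub>R (y - p $ i)))) has_derivative
      (\<lambda>h. gr i (upd p i ?x) \<bullet> (h *\<^sub>R (y - p $ i)))) (at t)"
    using diff_chain_at[OF inner outer] by (simp add: o_def)
  then show ?thesis
    unfolding has_field_derivative_def by (rule has_derivative_eq_rhs) (auto simp: fun_eq_iff)
qed

text \<open>Monotonicity restricted to player \<open>i\<close>'s segment makes the directional derivative
nonincreasing, so the mean value theorem yields the tangent bound.\<close>

lemma utility_le_linearization:
  assumes p: "p \<in> X" and y: "y \<in> Xs i"
  shows "v i (upd p i y) \<le> v i p + gr i p \<bullet> (y - p $ i)"
proof -
  let ?q = "\<lambda>t. upd p i (p $ i + t *\<^sub>R (y - p $ i))"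
  obtain z where z: "0 < z" "z < 1"
    and mvt: "v i (?q 1) - v i (?q 0) = gr i (?q z) \<bullet> (y - p $ i)"
    using MVT2[of 0 1 "\<lambda>t. v i (?q t)", OF zero_less_one has_real_derivative_along_segment[OF p y]]
    by auto
  have q: "?q z \<in> X"
    using z by (intro upd_in_profiles[OF p segment_point_in[OF p y]]) auto
  have "z * ((gr i (?q z) - gr i p) \<bullet> (y - p $ i)) = (F (?q z) - F p) \<bullet> (?q z - p)"
    using inner_upd_diff[of "F (?q z) - F p" p i] by (simp add: game_field_def)
  also have "\<dots> \<le> 0"
    using field_monotone[OF q p] .
  finally have "gr i (?q z) \<bullet> (y - p $ i) \<le> gr i p \<bullet> (y - p $ i)"
    using z by (simp add: mult_le_0_iff inner_diff_left)
  then show ?thesis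
    using mvt by simp
qed

definition perturbed_vi :: "real \<Rightarrow> ('e ^ 'n) \<Rightarrow> ('e ^ 'n) \<Rightarrow> bool" where
  "perturbed_vi \<mu> s p \<longleftrightarrow> p \<in> X \<and> (\<forall>q\<in>X. (F p - \<mu> *\<^sub>R (p - s)) \<bullet> (q - p) \<le> 0)"

lemma perturbed_eq_first_order:
  assumes eq: "is_perturbed_eq v Xs \<mu> s p" and y: "y \<in> Xs i"
  shows "(gr i p - \<mu> *\<^sub>R (p $ i - s $ i)) \<bullet> (y - p $ i) \<le> 0"
proof (rule ccontr)
  assume violated: "\<not> ?thesis"
  have p: "p \<in> X"
    using eq unfolding is_perturbed_eq_def by auto
  define a where "a = p $ i - s $ i"
  define w where "w = y - p $ i"
  define \<psi> where "\<psi> t = v i (upd p i (p $ i + t *\<^sub>R w))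
    - \<mu> * ((norm a)\<^sup>2 + 2 * t * (a \<bullet> w) + t\<^sup>2 * (norm w)\<^sup>2) / 2" for t
  have "((\<lambda>t. v i (upd p i (p $ i + t *\<^sub>R w))) has_real_derivative gr i p \<bullet> w) (at 0)"
    using has_real_derivative_along_segment[OF p y, of 0] unfolding w_def by simp
  moreover have "((\<lambda>t. \<mu> * ((norm a)\<^sup>2 + 2 * t * (a \<bullet> w) + t\<^sup>2 * (norm w)\<^sup>2) / 2)
      has_real_derivative \<mu> * (a \<bullet> w)) (at 0)"
    by (auto intro!: derivative_eq_intros)
  ultimately have deriv: "(\<psi> has_real_derivative gr i p \<bullet> w - \<mu> * (a \<bullet> w)) (at 0)"
    unfolding \<psi>_def by (rule DERIV_diff)
  have "0 < gr i p \<bullet> w - \<mu> * (a \<bullet> w)"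
    using violated unfolding a_def w_def by (simp add: inner_diff_left)
  then obtain d where "d > 0" and increase: "\<And>h. 0 < h \<Longrightarrow> h < d \<Longrightarrow> \<psi> 0 < \<psi> (0 + h)"
    using DERIV_pos_inc_right[OF deriv] by blast
  define h where "h = min (d / 2) 1"
  have h: "0 < h" "h < d" "h \<le> 1"
    using \<open>d > 0\<close> unfolding h_def by auto
  have "p $ i + h *\<^sub>R w \<in> Xs i"
    unfolding w_def using segment_point_in[OF p y] h by auto
  then have "v i (upd p i (p $ i + h *\<^sub>R w)) - \<mu> * (norm (a + h *\<^sub>R w))\<^sup>2 / 2 \<le> v i p - \<mu> * (norm a)\<^sup>2 / 2"
    using eq unfolding is_perturbed_eq_def a_def by (simp add: algebra_simps)
  moreover have "(norm (a + h *\<^sub>R w))\<^sup>2 = (norm a)\<^sup>2 + 2 * h * (a \<bullet> w) + h\<^sup>2 * (norm w)\<^sup>2"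
    using power2_norm_add[of a "h *\<^sub>R w"] by (simp add: power_mult_distrib)
  ultimately have "\<psi> h \<le> \<psi> 0"
    unfolding \<psi>_def by simp
  then show False
    using increase[OF h(1,2)] by simp
qed

lemma is_perturbed_eq_imp_vi:
  assumes eq: "is_perturbed_eq v Xs \<mu> s p"
  shows "perturbed_vi \<mu> s p"
proof -
  have "(F p - \<mu> *\<^sub>R (p - s)) \<bullet> (q - p) \<le> 0" if "q \<in> X" for q
  proof -
    have "(F p - \<mu> *\<^sub>R (p - s)) \<bullet> (q - p) =
        (\<Sum>i\<in>UNIV. (gr i p - \<mu> *\<^sub>R (p $ i - s $ i)) \<bullet> (q $ i - p $ i))"
      by (simp add: inner_vec_def game_field_def)
    also have "\<dots> \<le> 0"
      using that by (intro sum_nonpos perturbed_eq_first_order[OF eq]) (auto simp: profiles_def)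
    finally show ?thesis .
  qed
  then show ?thesis
    using eq unfolding perturbed_vi_def is_perturbed_eq_def by auto
qed

lemma perturbed_vi_imp_is_perturbed_eq:
  assumes vi: "perturbed_vi \<mu> s p" and \<mu>: "\<mu> > 0"
  shows "is_perturbed_eq v Xs \<mu> s p"
proof -
  have p: "p \<in> X"
    using vi unfolding perturbed_vi_def by auto
  have "v i (upd p i y) - \<mu> * (norm (y - s $ i))\<^sup>2 / 2 \<le> v i p - \<mu> * (norm (p $ i - s $ i))\<^sup>2 / 2"
    if y: "y \<in> Xs i" for i y
  proof -
    define a where "a = p $ i - s $ i"
    define w where "w = y - p $ i"
    have "(F p - \<mu> *\<^sub>R (p - s)) \<bullet> (upd p i y - p) \<le> 0"
      using vi upd_in_profiles[OF p y] unfolding perturbed_vi_def by blast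
    then have "gr i p \<bullet> w \<le> \<mu> * (a \<bullet> w)"
      unfolding inner_upd_diff a_def w_def by (simp add: game_field_def inner_diff_left)
    moreover have "v i (upd p i y) \<le> v i p + gr i p \<bullet> w"
      using utility_le_linearization[OF p y] unfolding w_def .
    moreover have "y - s $ i = a + w"
      unfolding a_def w_def by simp
    then have "\<mu> * (norm (y - s $ i))\<^sup>2 = \<mu> * (norm a)\<^sup>2 + 2 * (\<mu> * (a \<bullet> w)) + \<mu> * (norm w)\<^sup>2"
      using power2_norm_add[of a w] by (simp add: algebra_simps)
    moreover have "0 \<le> \<mu> * (norm w)\<^sup>2"
      using \<mu> by simp
    ultimately show ?thesis
      unfolding a_def[symmetric] by linarith
  qed
  then show ?thesis
    using p unfolding is_perturbed_eq_def by auto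
qed

lemma perturbed_vi_firmly_nonexpansive:
  assumes vi: "perturbed_vi \<mu> a p" "perturbed_vi \<mu> b p'" and "\<mu> > 0"
  shows "(norm (p - p'))\<^sup>2 \<le> (a - b) \<bullet> (p - p')"
proof -
  have p: "p \<in> X" and p': "p' \<in> X"
    using vi unfolding perturbed_vi_def by auto
  have "(F p - \<mu> *\<^sub>R (p - a)) \<bullet> (p' - p) \<le> 0" "(F p' - \<mu> *\<^sub>R (p' - b)) \<bullet> (p - p') \<le> 0"
    using vi p p' unfolding perturbed_vi_def by auto
  moreover have "(F p - F p') \<bullet> (p - p') \<le> 0"
    using field_monotone[OF p p'] .
  moreover have "\<mu> * ((p - p') \<bullet> (p - p')) - \<mu> * ((a - b) \<bullet> (p - p'))
      = (F p - F p') \<bullet> (p - p') + (F p - \<mu> *\<^sub>R (p - a)) \<bullet> (p' - p)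
        + (F p' - \<mu> *\<^sub>R (p' - b)) \<bullet> (p - p')"
    by (simp add: inner_diff_left inner_diff_right inner_commute algebra_simps)
  ultimately have "\<mu> * ((p - p') \<bullet> (p - p')) \<le> \<mu> * ((a - b) \<bullet> (p - p'))"
    by linarith
  then show ?thesis
    using \<open>\<mu> > 0\<close> by (simp add: power2_norm_eq_inner)
qed

lemma perturbed_vi_unique:
  assumes "perturbed_vi \<mu> s p" "perturbed_vi \<mu> s p'" "\<mu> > 0"
  shows "p = p'"
  using perturbed_vi_firmly_nonexpansive[OF assms] by simp

text \<open>A fixed point of \<open>z \<mapsto> proj\<^sub>X (z + F z - \<mu> (z - s))\<close>, which exists by Brouwer,
solves the variational inequality.\<close>

lemma perturbed_vi_exists:
  assumes "\<mu> > 0"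
  obtains p where "perturbed_vi \<mu> s p"
proof -
  define T where "T z = closest_point X (z + (F z - \<mu> *\<^sub>R (z - s)))" for z
  have closed: "closed X"
    using compact_X by (rule compact_imp_closed)
  have "continuous_on X (\<lambda>z. z + (F z - \<mu> *\<^sub>R (z - s)))"
    by (intro continuous_intros continuous_on_field)
  then have "continuous_on X T"
    unfolding T_def
    by (rule continuous_on_compose2[OF continuous_on_closest_point[OF convex_X closed X_nonempty]])
       auto
  moreover have "T \<in> X \<rightarrow> X"
    unfolding T_def using closest_point_in_set[OF closed X_nonempty] by auto
  ultimately obtain z where z: "z \<in> X" "T z = z"
    using brouwer[OF compact_X convex_X X_nonempty] by blast
  have "(F z - \<mu> *\<^sub>R (z - s)) \<bullet> (q - z) \<le> 0" if "q \<in> X" for q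
    using closest_point_dot[OF convex_X closed that, of "z + (F z - \<mu> *\<^sub>R (z - s))"] z(2)
    unfolding T_def by simp
  then show ?thesis
    using that z unfolding perturbed_vi_def by blast
qed

lemma perturbed_vi_perturbed_eq:
  assumes "\<mu> > 0"
  shows "perturbed_vi \<mu> s (perturbed_eq v Xs \<mu> s)"
proof -
  obtain p where "perturbed_vi \<mu> s p"
    using perturbed_vi_exists[OF assms] .
  then have "\<exists>!p. is_perturbed_eq v Xs \<mu> s p"
    using perturbed_vi_imp_is_perturbed_eq is_perturbed_eq_imp_vi perturbed_vi_unique assms
    by blast
  then show ?thesis
    unfolding perturbed_eq_def by (rule is_perturbed_eq_imp_vi[OF theI'])
qed

lemma exploit_le_field_gap:
  assumes p: "p \<in> X"
  obtains q where "q \<in> X" "exploit v Xs p \<le> F p \<bullet> (q - p)"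
proof -
  have "\<exists>y\<in>Xs i. \<forall>z\<in>Xs i. gr i p \<bullet> (z - p $ i) \<le> gr i p \<bullet> (y - p $ i)" for i
    using strategy_sets[of i]
    by (intro continuous_attains_sup) (auto intro!: continuous_intros)
  then obtain best where best: "\<And>i. best i \<in> Xs i"
    "\<And>i z. z \<in> Xs i \<Longrightarrow> gr i p \<bullet> (z - p $ i) \<le> gr i p \<bullet> (best i - p $ i)"
    by metis
  define q where "q = (\<chi> i. best i)"
  have "(SUP y\<in>Xs i. v i (upd p i y)) - v i p \<le> gr i p \<bullet> (q $ i - p $ i)" for i
  proof -
    have "(SUP y\<in>Xs i. v i (upd p i y)) \<le> v i p + gr i p \<bullet> (q $ i - p $ i)"
    proof (rule cSUP_least)
      show "Xs i \<noteq> {}"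
        using strategy_sets by auto
      show "v i (upd p i y) \<le> v i p + gr i p \<bullet> (q $ i - p $ i)" if "y \<in> Xs i" for y
        using utility_le_linearization[OF p that] best(2)[OF that] unfolding q_def by simp
    qed
    then show ?thesis by simp
  qed
  then have "exploit v Xs p \<le> (\<Sum>i\<in>UNIV. gr i p \<bullet> (q $ i - p $ i))"
    unfolding exploit_def by (rule sum_mono)
  also have "\<dots> = F p \<bullet> (q - p)"
    by (simp add: inner_vec_def game_field_def)
  finally have "exploit v Xs p \<le> F p \<bullet> (q - p)" .
  moreover have "q \<in> X"
    using best(1) unfolding q_def profiles_def by simp
  ultimately show ?thesis
    using that by blast
qed

end

section \<open>Last-iterate convergence\<close>

locale perturbed_game = monotone_game +
  fixes \<mu> :: real
  assumes \<mu>_pos: "\<mu> > 0"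
begin

abbreviation peq where "peq \<equiv> perturbed_eq v Xs \<mu>"

abbreviation diam where "diam \<equiv> diameter X"

lemma peq_vi: "perturbed_vi \<mu> s (peq s)"
  using perturbed_vi_perturbed_eq[OF \<mu>_pos] .

lemma peq_in: "peq s \<in> X"
  using peq_vi unfolding perturbed_vi_def by auto

lemma norm_diff_le_diam: "a \<in> X \<Longrightarrow> b \<in> X \<Longrightarrow> norm (a - b) \<le> diam"
  using diameter_bounded_bound[OF compact_imp_bounded[OF compact_X]] by (simp add: dist_norm)

lemma diam_nonneg: "0 \<le> diam"
  using X_nonempty norm_diff_le_diam by (metis ex_in_conv norm_ge_zero order_trans)

lemma firmly_nonexpansive_peq: "firmly_nonexpansive peq"
  unfolding firmly_nonexpansive_def
  using perturbed_vi_firmly_nonexpansive[OF peq_vi peq_vi \<mu>_pos] by blast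

lemma peq_fixpoint_exists:
  obtains x where "x \<in> X" "peq x = x"
  using brouwer[OF compact_X convex_X X_nonempty firmly_nonexpansive_continuous_on[OF firmly_nonexpansive_peq]]
    peq_in by blast

text \<open>With \<open>p = peq s\<close> and \<open>q\<close> a best response to the linearized game at \<open>t\<close>, split
\<open>F t \<bullet> (q - t) = F p \<bullet> (q - p) + (F t - F p) \<bullet> (q - t) + F p \<bullet> (p - t)\<close>; the first term
is at most \<open>\<mu> (p - s) \<bullet> (q - p)\<close> by the variational inequality.\<close>

lemma exploit_le_residual:
  assumes s: "s \<in> X" and t: "t \<in> X" and \<zeta>: "\<And>p. p \<in> X \<Longrightarrow> norm (F p) \<le> \<zeta>"
  shows "exploit v Xs t \<le> \<mu> * diam * norm (peq s - s) + (L * diam + \<zeta>) * norm (peq s - t)"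
proof -
  obtain q where q: "q \<in> X" and gap: "exploit v Xs t \<le> F t \<bullet> (q - t)"
    using exploit_le_field_gap[OF t] .
  define p where "p = peq s"
  have p: "p \<in> X"
    unfolding p_def by (rule peq_in)
  have "F p \<bullet> (q - p) \<le> \<mu> * ((p - s) \<bullet> (q - p))"
    using peq_vi[of s] q unfolding perturbed_vi_def p_def by (auto simp: inner_diff_left)
  also have "\<dots> \<le> \<mu> * (norm (p - s) * diam)"
  proof (rule mult_left_mono)
    have "(p - s) \<bullet> (q - p) \<le> norm (p - s) * norm (q - p)"
      by (rule norm_cauchy_schwarz)
    also have "\<dots> \<le> norm (p - s) * diam"
      using norm_diff_le_diam[OF q p] by (simp add: mult_left_mono)
    finally show "(p - s) \<bullet> (q - p) \<le> norm (p - s) * diam" .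
  qed (use \<mu>_pos in simp)
  finally have vi_term: "F p \<bullet> (q - p) \<le> \<mu> * diam * norm (p - s)"
    by (simp add: algebra_simps)
  have "(F t - F p) \<bullet> (q - t) \<le> norm (F t - F p) * norm (q - t)"
    by (rule norm_cauchy_schwarz)
  also have "\<dots> \<le> (L * norm (t - p)) * diam"
    using field_lipschitz[OF t p] norm_diff_le_diam[OF q t] L_nonneg by (intro mult_mono) auto
  finally have lipschitz_term: "(F t - F p) \<bullet> (q - t) \<le> L * diam * norm (p - t)"
    by (simp add: norm_minus_commute algebra_simps)
  have "F p \<bullet> (p - t) \<le> norm (F p) * norm (p - t)"
    by (rule norm_cauchy_schwarz)
  also have "\<dots> \<le> \<zeta> * norm (p - t)"
    using \<zeta>[OF p] by (intro mult_right_mono) auto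
  finally have bounded_term: "F p \<bullet> (p - t) \<le> \<zeta> * norm (p - t)" .
  have "F t \<bullet> (q - t) = F p \<bullet> (q - p) + (F t - F p) \<bullet> (q - t) + F p \<bullet> (p - t)"
    by (simp add: inner_diff_left inner_diff_right algebra_simps)
  then show ?thesis
    using gap vi_term lipschitz_term bounded_term unfolding p_def by (simp add: algebra_simps)
qed

lemma exploit_inexact_iteration_le:
  assumes s: "\<And>k. k \<le> Suc n \<Longrightarrow> s k \<in> X" and \<zeta>: "\<And>p. p \<in> X \<Longrightarrow> norm (F p) \<le> \<zeta>"
  shows "exploit v Xs (s (Suc n))
    \<le> \<mu> * diam * ((\<Sum>k<n. norm (peq (s k) - s (Suc k)))
          + (diam + 3/2 * (\<Sum>k<Suc n. norm (peq (s k) - s (Suc k)))) / sqrt (real (Suc n)))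
      + (L * diam + \<zeta>) * norm (peq (s n) - s (Suc n))"
proof -
  obtain x where "x \<in> X" "peq x = x"
    using peq_fixpoint_exists .
  then have residual: "norm (peq (s n) - s n) \<le> (\<Sum>k<n. norm (peq (s k) - s (Suc k)))
      + (diam + 3/2 * (\<Sum>k<Suc n. norm (peq (s k) - s (Suc k)))) / sqrt (real (Suc n))"
    using s peq_in norm_diff_le_diam
    by (intro firmly_nonexpansive_inexact_iteration[OF firmly_nonexpansive_peq, where S = X]) auto
  have "0 \<le> \<mu> * diam"
    using \<mu>_pos diam_nonneg by simp
  with residual show ?thesis
    using exploit_le_residual[OF s[of n] s[of "Suc n"] \<zeta>] mult_left_mono by fastforce
qed

lemma borel_measurable_step_error:
  assumes "f \<in> borel_measurable M" "g \<in> borel_measurable M"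
  shows "(\<lambda>x. norm (peq (f x) - g x)) \<in> borel_measurable M"
proof -
  have "peq \<in> borel_measurable borel"
    by (intro borel_measurable_continuous_onI firmly_nonexpansive_continuous_on firmly_nonexpansive_peq)
  then have [measurable]: "(\<lambda>x. peq (f x)) \<in> borel_measurable M"
    using measurable_compose[OF assms(1)] by blast
  show ?thesis
    using assms(2) by measurable
qed

lemma integrable_step_error:
  assumes "finite_measure M" "f \<in> borel_measurable M" "g \<in> borel_measurable M"
    and "\<And>x. x \<in> space M \<Longrightarrow> g x \<in> X"
  shows "integrable M (\<lambda>x. norm (peq (f x) - g x))"
  using assms norm_diff_le_diam[OF peq_in]
  by (intro finite_measure.integrable_const_bound[where B = diam] borel_measurable_step_error) auto

lemma expected_step_error_le:
  assumes "prob_space M" "f \<in> borel_measurable M" "g \<in> borel_measurable M"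
    and "\<And>x. x \<in> space M \<Longrightarrow> g x \<in> X"
    and "AE x in M. real_cond_exp M (vimage_algebra (space M) f borel)
          (\<lambda>y. (norm (peq (f y) - g y))\<^sup>2) x \<le> \<delta>\<^sup>2"
    and "0 < \<delta>"
  shows "(\<integral>x. norm (peq (f x) - g x) \<partial>M) \<le> \<delta>"
proof (rule prob_space.integral_le_of_cond_exp_power2_le[OF assms(1)])
  show "subalgebra M (vimage_algebra (space M) f borel)"
    unfolding subalgebra_def using sets_image_in_sets[OF refl assms(2)] by simp
  show "\<bar>norm (peq (f x) - g x)\<bar> \<le> diam" if "x \<in> space M" for x
    using norm_diff_le_diam[OF peq_in assms(4)[OF that]] by simp
qed (use assms borel_measurable_step_error in auto)

lemma integral_sum_step_errors_le:
  assumes "prob_space M" and "m \<le> K"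
    and meas: "\<And>k. k \<le> K \<Longrightarrow> \<sigma> k \<in> borel_measurable M"
    and in_X: "\<And>k x. k \<le> K \<Longrightarrow> x \<in> space M \<Longrightarrow> \<sigma> k x \<in> X"
    and err: "\<And>k. k < K \<Longrightarrow> (\<integral>x. norm (peq (\<sigma> k x) - \<sigma> (Suc k) x) \<partial>M) \<le> \<delta>"
  shows "integrable M (\<lambda>x. \<Sum>k<m. norm (peq (\<sigma> k x) - \<sigma> (Suc k) x))"
    and "(\<integral>x. (\<Sum>k<m. norm (peq (\<sigma> k x) - \<sigma> (Suc k) x)) \<partial>M) \<le> real m * \<delta>"
proof -
  have int: "integrable M (\<lambda>x. norm (peq (\<sigma> k x) - \<sigma> (Suc k) x))" if "k < m" for k
    using that \<open>m \<le> K\<close> meas in_X prob_space.finite_measure[OF \<open>prob_space M\<close>]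
    by (intro integrable_step_error) auto
  then show "integrable M (\<lambda>x. \<Sum>k<m. norm (peq (\<sigma> k x) - \<sigma> (Suc k) x))"
    by (intro Bochner_Integration.integrable_sum) auto
  have "(\<integral>x. (\<Sum>k<m. norm (peq (\<sigma> k x) - \<sigma> (Suc k) x)) \<partial>M)
      = (\<Sum>k<m. (\<integral>x. norm (peq (\<sigma> k x) - \<sigma> (Suc k) x) \<partial>M))"
    using int by (intro Bochner_Integration.integral_sum) auto
  also have "\<dots> \<le> (\<Sum>k<m. \<delta>)"
    using err \<open>m \<le> K\<close> by (intro sum_mono) auto
  finally show "(\<integral>x. (\<Sum>k<m. norm (peq (\<sigma> k x) - \<sigma> (Suc k) x)) \<partial>M) \<le> real m * \<delta>"
    by simp
qed

lemma expected_exploit_le: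
  assumes M: "prob_space M" and "K = Suc n"
    and meas: "\<And>k. k \<le> K \<Longrightarrow> \<sigma> k \<in> borel_measurable M"
    and in_X: "\<And>k x. k \<le> K \<Longrightarrow> x \<in> space M \<Longrightarrow> \<sigma> k x \<in> X"
    and err: "\<And>k. k < K \<Longrightarrow> (\<integral>x. norm (peq (\<sigma> k x) - \<sigma> (Suc k) x) \<partial>M) \<le> \<delta>"
    and \<zeta>: "\<And>p. p \<in> X \<Longrightarrow> norm (F p) \<le> \<zeta>"
  shows "(\<integral>x. exploit v Xs (\<sigma> K x) \<partial>M)
    \<le> \<mu> * diam * ((real K - 1) * \<delta> + (diam + 3/2 * (real K * \<delta>)) / sqrt (real K)) + (L * diam + \<zeta>) * \<delta>"
proof -
  interpret M: prob_space M by (rule M)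
  have "0 \<le> \<zeta>"
    using field_bound_nonneg \<zeta> .
  define e where "e k x = norm (peq (\<sigma> k x) - \<sigma> (Suc k) x)" for k x
  define B where "B x = \<mu> * diam * ((\<Sum>k<n. e k x) + (diam + 3/2 * (\<Sum>k<K. e k x)) / sqrt (real K))
    + (L * diam + \<zeta>) * e n x" for x
  note sums = integral_sum_step_errors_le[where \<sigma> = \<sigma> and K = K, OF M _ meas in_X err, folded e_def]
  have int_last: "integrable M (e n)"
    unfolding e_def using \<open>K = Suc n\<close> meas in_X M.finite_measure_axioms
    by (intro integrable_step_error) auto
  have "(\<integral>x. exploit v Xs (\<sigma> K x) \<partial>M) \<le> (\<integral>x. B x \<partial>M)"
  proof (rule integral_le_of_nonneg_integrable_bound)
    show "integrable M B"
      unfolding B_def using sums(1)[of n] sums(1)[of K] int_last \<open>K = Suc n\<close> by simp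
    show "exploit v Xs (\<sigma> K x) \<le> B x" if "x \<in> space M" for x
      using exploit_inexact_iteration_le[where s = "\<lambda>k. \<sigma> k x" and n = n] in_X[OF _ that] \<zeta>
      unfolding B_def e_def \<open>K = Suc n\<close> by simp
    show "0 \<le> B x" for x
      unfolding B_def e_def using \<mu>_pos diam_nonneg L_nonneg \<open>0 \<le> \<zeta>\<close>
      by (intro add_nonneg_nonneg mult_nonneg_nonneg divide_nonneg_nonneg sum_nonneg) auto
  qed
  also have "\<dots> = \<mu> * diam * ((\<integral>x. (\<Sum>k<n. e k x) \<partial>M)
      + (diam + 3/2 * (\<integral>x. (\<Sum>k<K. e k x) \<partial>M)) / sqrt (real K)) + (L * diam + \<zeta>) * (\<integral>x. e n x \<partial>M)"
    unfolding B_def using sums(1)[of n] sums(1)[of K] int_last \<open>K = Suc n\<close> by (simp add: M.prob_space)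
  also have "\<dots> \<le> \<mu> * diam * ((real K - 1) * \<delta> + (diam + 3/2 * (real K * \<delta>)) / sqrt (real K))
      + (L * diam + \<zeta>) * \<delta>"
    using sums(2)[of n] sums(2)[of K] err[of n] \<open>K = Suc n\<close> \<mu>_pos diam_nonneg L_nonneg \<open>0 \<le> \<zeta>\<close>
    unfolding e_def by (intro add_mono mult_left_mono divide_right_mono) auto
  finally show ?thesis .
qed

end

theorem theorem7:
  fixes Xs :: "'n::finite \<Rightarrow> 'e::euclidean_space set"
    and v :: "'n \<Rightarrow> ('e ^ 'n) \<Rightarrow> real"
    and gr :: "'n \<Rightarrow> ('e ^ 'n) \<Rightarrow> 'e"
    and L \<mu> c \<zeta> :: real and K T :: nat
    and M :: "'w measure"
    and \<sigma> :: "nat \<Rightarrow> 'w \<Rightarrow> ('e ^ 'n)"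
    and s0 :: "'e ^ 'n"
  assumes Xs: "\<And>i. Xs i \<noteq> {} \<and> compact (Xs i) \<and> convex (Xs i)"
    and diff: "\<And>i p. p \<in> profiles Xs \<Longrightarrow> v i differentiable (at p)"
    and grad: "\<And>i p. p \<in> profiles Xs \<Longrightarrow>
        ((\<lambda>x. v i (upd p i x)) has_derivative (\<lambda>h. gr i p \<bullet> h)) (at (p $ i))"
    and monotone: "\<And>p q. p \<in> profiles Xs \<Longrightarrow> q \<in> profiles Xs \<Longrightarrow>
        (\<Sum>i\<in>UNIV. (gr i p - gr i q) \<bullet> (p $ i - q $ i)) \<le> 0"
    and L_nonneg: "L \<ge> 0"
    and smooth: "\<And>p q. p \<in> profiles Xs \<Longrightarrow> q \<in> profiles Xs \<Longrightarrow>
        (\<Sum>i\<in>UNIV. (norm (gr i p - gr i q))\<^sup>2) \<le> L\<^sup>2 * (norm (p - q))\<^sup>2"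
    and mu: "\<mu> > 0"
    and K: "K \<ge> 3"
    and T: "real T \<ge> max (real K ^ 4) 3"
    and c: "c > 0"
    and M: "prob_space M"
    and s0: "s0 \<in> profiles Xs"
    and sigma0: "\<And>x. x \<in> space M \<Longrightarrow> \<sigma> 0 x = s0"
    and sigma_meas: "\<And>k. k \<le> K \<Longrightarrow> \<sigma> k \<in> borel_measurable M"
    and sigma_in: "\<And>k x. k \<le> K \<Longrightarrow> x \<in> space M \<Longrightarrow> \<sigma> k x \<in> profiles Xs"
    and cond: "\<And>k. k < K \<Longrightarrow>
        AE x in M. real_cond_exp M (vimage_algebra (space M) (\<sigma> k) borel)
          (\<lambda>y. (norm (perturbed_eq v Xs \<mu> (\<sigma> k y) - \<sigma> (Suc k) y))\<^sup>2) x
          \<le> c\<^sup>2 * ln (real T) / real T"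
    and zeta: "\<And>p. p \<in> profiles Xs \<Longrightarrow> sqrt (\<Sum>i\<in>UNIV. (norm (gr i p))\<^sup>2) \<le> \<zeta>"
  shows "(\<integral>x. exploit v Xs (\<sigma> K x) \<partial>M)
       \<le> (2 * (diameter (profiles Xs) * (c * L + \<mu> * sqrt c * sqrt (2 * diameter (profiles Xs) + \<zeta> / \<mu> + c))
              + c * \<zeta>) * ln (real K) + \<mu> * (diameter (profiles Xs))\<^sup>2) / sqrt (real K)"
proof -
  interpret perturbed_game Xs v gr L \<mu>
    by unfold_locales (use Xs grad monotone L_nonneg smooth mu in auto)
  obtain n where K_Suc: "K = Suc n"
    using K by (cases K) auto
  have field_bound: "\<And>p. p \<in> X \<Longrightarrow> norm (F p) \<le> \<zeta>"
    using zeta by (simp add: norm_game_field)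
  define \<delta> where "\<delta> = c * sqrt (ln (real T) / real T)"
  have "0 < \<delta>"
    unfolding \<delta>_def using c T by simp
  have \<delta>_le: "\<delta> \<le> 2 * c * sqrt (ln (real K)) / (real K)\<^sup>2"
    unfolding \<delta>_def using sqrt_ln_div_le[of "real K" "real T" c] K T c by simp
  have err: "(\<integral>x. norm (peq (\<sigma> k x) - \<sigma> (Suc k) x) \<partial>M) \<le> \<delta>" if "k < K" for k
    using cond[OF that] sigma_meas sigma_in that M c T \<open>0 < \<delta>\<close>
    by (intro expected_step_error_le) (auto simp: \<delta>_def power_mult_distrib)
  have "0 \<le> \<zeta>"
    using field_bound_nonneg field_bound .
  have "(\<integral>x. exploit v Xs (\<sigma> K x) \<partial>M)
      \<le> \<mu> * diam * ((real K - 1) * \<delta> + (diam + 3/2 * (real K * \<delta>)) / sqrt (real K)) + (L * diam + \<zeta>) * \<delta>"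
    by (rule expected_exploit_le[where \<sigma> = \<sigma>, OF M K_Suc sigma_meas sigma_in err field_bound])
  also have "\<dots> \<le> (2 * (diam * (c * L + \<mu> * sqrt c * sqrt (2 * diam + \<zeta> / \<mu> + c)) + c * \<zeta>) * ln (real K)
      + \<mu> * diam\<^sup>2) / sqrt (real K)"
    using K \<open>0 < \<delta>\<close> \<delta>_le c diam_nonneg L_nonneg \<open>0 \<le> \<zeta>\<close> mu by (intro explicit_rate_le) auto
  finally show ?thesis .
qed

end
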